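(* Galkin's lower bound holds for each of the following Grassmannians: (1) $\mathrm{Gr}(1,n)$ ($\cong\mathbb{P}^{n-1}$) for $n\geq 2$; (2) $\mathrm{Gr}(2,n)$ for $n\geq 3$; (3) $\mathrm{Gr}(3,n)$ for $n\geq 4$; (4) $\mathrm{Gr}(k,n)$ for $k\geq 4$ and $n\geq 2(k-1)$. Here "Galkin's lower bound holds for $\mathrm{Gr}(k,n)$" means: the largest real eigenvalue $\delta_0$ of $\hat c_1$ for $\mathrm{Gr}(k,n)$ satisfies $\delta_0\geq k(n-k)+1$, with equality if and only if $\mathrm{Gr}(k,n)$ is isomorphic to the projective space $\mathbb{P}^{n-1}$.
   Context: $\mathrm{Gr}(k,n)$ is the Grassmannian of $k$-dimensional linear subspaces of $\mathbb{C}^n$, of dimension $k(n-k)$. Let $\Lambda$ be the set of partitions $\lambda=(\lambda_1\geq \cdots\geq \lambda_k)$ with $n-k\geq \lambda_1$ and $\lambda_k\geq 0$, and $|\lambda|=\lambda_1+\cdots+\lambda_k$. For $\lambda\in\Lambda$ with $\lambda_1=n-k$ and $\lambda_k>0$ put $\lambda^*=(\lambda_2-1\geq\cdots\geq\lambda_k-1\geq 0)$; otherwise $\lambda^*$ does not exist. The operator $\hat c_1$ (quantum multiplication by $c_1(\mathrm{Gr}(k,n))=n\sigma_{(1)}$ specialized at $q=1$) is the linear endomorphism of the vector space with basis $\{\sigma_\lambda\}_{\lambda\in\Lambda}$ given by $\hat c_1(\sigma_\lambda)=n\sigma_{\lambda^*}+n\sum\sigma_\mu$, the sum over all $\mu\in\Lambda$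 with $|\mu|=|\lambda|+1$ and $\lambda\subset\mu$, the term $n\sigma_{\lambda^*}$ omitted if $\lambda^*$ does not exist. $\delta_0$ is the largest real eigenvalue of $\hat c_1$ (equal to the maximum modulus of its eigenvalues). *)

theory Defs
  imports Complex_Main
begin

text \<open>Partitions lambda = (lambda_1 >= ... >= lambda_k) with n-k >= lambda_1 and lambda_k >= 0,
  represented as lists of length k (entry i is lambda_(i+1)).\<close>

definition partitions :: "nat \<Rightarrow> nat \<Rightarrow> nat list set" where
  "partitions k n = {l. length l = k \<and> sorted_wrt (\<ge>) l \<and> (\<forall>x\<in>set l. x \<le> n - k)}"

definition psize :: "nat list \<Rightarrow> nat" where
  "psize l = sum_list l"

definition pcontained :: "nat list \<Rightarrow> nat list \<Rightarrow> bool" where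
  "pcontained l m \<longleftrightarrow> length l = length m \<and> (\<forall>i<length l. l ! i \<le> m ! i)"

definition star_exists :: "nat \<Rightarrow> nat \<Rightarrow> nat list \<Rightarrow> bool" where
  "star_exists k n l \<longleftrightarrow> l \<noteq> [] \<and> hd l = n - k \<and> last l > 0"

definition pstar :: "nat list \<Rightarrow> nat list" where
  "pstar l = map (\<lambda>x. x - 1) (tl l) @ [0]"

text \<open>Matrix of \<open>c1_hat\<close> in the basis sigma_lambda:
  \<open>c1_hat_coeff k n mu lam\<close> is the coefficient of sigma_mu in c1_hat(sigma_lam).\<close>
definition c1_hat_coeff :: "nat \<Rightarrow> nat \<Rightarrow> nat list \<Rightarrow> nat list \<Rightarrow> complex" where
  "c1_hat_coeff k n mu lam =
     (if star_exists k n lam \<and> mu = pstar lam then of_nat n else 0)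
   + (if mu \<in> partitions k n \<and> psize mu = psize lam + 1 \<and> pcontained lam mu then of_nat n else 0)"

definition c1_hat_eigenvalue :: "nat \<Rightarrow> nat \<Rightarrow> complex \<Rightarrow> bool" where
  "c1_hat_eigenvalue k n z \<longleftrightarrow>
     (\<exists>v :: nat list \<Rightarrow> complex.
        (\<exists>lam\<in>partitions k n. v lam \<noteq> 0) \<and>
        (\<forall>mu\<in>partitions k n. (\<Sum>lam\<in>partitions k n. c1_hat_coeff k n mu lam * v lam) = z * v mu))"

definition real_eigenvalues :: "nat \<Rightarrow> nat \<Rightarrow> real set" where
  "real_eigenvalues k n = {x. c1_hat_eigenvalue k n (complex_of_real x)}"

definition delta0 :: "nat \<Rightarrow> nat \<Rightarrow> real" where
  "delta0 k n = Max (real_eigenvalues k n)"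

text \<open>Gr(k,n) (1 <= k <= n-1) is isomorphic to P^(n-1) iff k = 1 or k = n-1.\<close>
definition grass_iso_proj :: "nat \<Rightarrow> nat \<Rightarrow> bool" where
  "grass_iso_proj k n \<longleftrightarrow> k = 1 \<or> k = n - 1"

definition galkin_lower_bound :: "nat \<Rightarrow> nat \<Rightarrow> bool" where
  "galkin_lower_bound k n \<longleftrightarrow>
     finite (real_eigenvalues k n) \<and> real_eigenvalues k n \<noteq> {} \<and>
     delta0 k n \<ge> real (k * (n - k)) + 1 \<and>
     (delta0 k n = real (k * (n - k)) + 1 \<longleftrightarrow> grass_iso_proj k n)"

end

(*
  Put a_i = pi (lambda_i + k - 1 - i) / n and x(lambda) = prod_{i<j} sin (a_i - a_j).  Taking a box
  off row i of mu lowers a_i by pi / n, and the wrap-around lambda |-> lambda* rotates the a_i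
  cyclically, the one moved to the front gaining pi, which leaves x unchanged; rows from which no
  box can be removed contribute a product with a vanishing factor.  So the eigenvalue equation for
  x reduces to  sum_i x(a - (pi / n) e_i) = [k] x(a)  with [k] = sum_{m<k} cos ((k - 1 - 2m) pi / n),
  which for u_j = exp (2 sqrt(-1) a_j) and q = exp (-2 sqrt(-1) pi / n) is the Lagrange identity
  sum_i prod_{j <> i} (q u_i - u_j) / (u_i - u_j) = 1 + q + ... + q^(k-1).
  Hence n [k] is a real eigenvalue.  From cos t >= 1 - t^2 / 2 we get
  n [k] >= n k - pi^2 k (k^2 - 1) / (6 n) > k (n - k) + 1 as soon as pi^2 k < 6 n; the two
  remaining cases Gr(4,6), Gr(5,8) are evaluated exactly.  For projective spaces [k] = 1, and each
  sigma_mu receives at most one term of c1_hat(sigma_lambda), so the eigenvalue equation at a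
  coordinate of largest modulus bounds every eigenvalue by n = k (n - k) + 1.
*)
theory Submission
  imports Defs "Jordan_Normal_Form.Char_Poly" "HOL-Analysis.Complex_Transcendental"
begin

section \<open>A trigonometric Lagrange interpolation identity\<close>

lemma degree_coeff_prod_linear:
  fixes a b :: "'x \<Rightarrow> 'a::comm_ring_1"
  assumes "finite S"
  shows "degree (\<Prod>j\<in>S. [:a j, b j:]) \<le> card S \<and> coeff (\<Prod>j\<in>S. [:a j, b j:]) (card S) = (\<Prod>j\<in>S. b j)"
  using assms
proof (induction S rule: finite_induct)
  case empty
  then show ?case by simp
next
  case (insert x F)
  let ?p = "\<Prod>j\<in>F. [:a j, b j:]"
  have "degree ([:a x, b x:] * ?p) \<le> Suc (card F)"
    using degree_mult_le[of "[:a x, b x:]" ?p] degree_pCons_le[of "a x" "[:b x:]"] insert.IH by simp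
  moreover have "coeff ([:a x, b x:] * ?p) (Suc (card F))
      = a x * coeff ?p (Suc (card F)) + b x * coeff ?p (card F)"
    by (simp add: coeff_pCons)
  moreover have "coeff ?p (Suc (card F)) = 0"
    using insert.IH by (simp add: coeff_eq_0)
  ultimately show ?case
    using insert by (simp add: mult.commute)
qed

lemma lagrange_interpolation:
  fixes u :: "nat \<Rightarrow> 'a::field" and p :: "'a poly"
  assumes inj: "inj_on u {..<k}" and deg: "degree p \<le> k"
  shows "p = Polynomial.smult (coeff p k) (\<Prod>j<k. [:- u j, 1:])
           + (\<Sum>i<k. Polynomial.smult (poly p (u i) / (\<Prod>j\<in>{..<k}-{i}. u i - u j))
                              (\<Prod>j\<in>{..<k}-{i}. [:- u j, 1:]))"
    (is "p = Polynomial.smult _ ?M + (\<Sum>i<k. ?T i)")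
proof (rule poly_eqI_degree_lead_coeff[where A = "u ` {..<k}" and n = k])
  have M: "degree ?M \<le> k" "coeff ?M k = 1"
    using degree_coeff_prod_linear[of "{..<k}" "\<lambda>j. - u j" "\<lambda>_. 1"] by auto
  have T: "degree (?T i) < k" if "i < k" for i
  proof -
    have "degree (?T i) \<le> k - 1"
      using that degree_coeff_prod_linear[of "{..<k}-{i}" "\<lambda>j. - u j" "\<lambda>_. 1"]
      by (intro order.trans[OF degree_smult_le]) simp
    then show ?thesis
      using that by linarith
  qed
  then have "coeff (\<Sum>i<k. ?T i) k = 0"
    unfolding coeff_sum by (intro sum.neutral ballI coeff_eq_0 T) simp
  then show "coeff p k = coeff (Polynomial.smult (coeff p k) ?M + (\<Sum>i<k. ?T i)) k"
    using M by simp
  have "degree (Polynomial.smult (coeff p k) ?M) \<le> k"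
    using M(1) degree_smult_le order.trans by blast
  moreover have "degree (\<Sum>i<k. ?T i) \<le> k"
    by (intro degree_sum_le less_imp_le T) auto
  ultimately show "degree (Polynomial.smult (coeff p k) ?M + (\<Sum>i<k. ?T i)) \<le> k"
    by (rule degree_add_le)
  show "k \<le> card (u ` {..<k})"
    using inj by (simp add: card_image)
  show "degree p \<le> k"
    by (fact deg)
  fix z assume "z \<in> u ` {..<k}"
  then obtain m where m: "m < k" "z = u m"
    by auto
  have vanish: "poly (\<Prod>j\<in>J. [:- u j, 1:]) (u m) = 0" if "m \<in> J" "finite J" for J
    using that by (auto simp: poly_prod)
  have "(\<Prod>j\<in>{..<k}-{m}. u m - u j) \<noteq> 0"
    using inj m by (auto simp: inj_on_eq_iff)
  then have "poly (?T m) (u m) = poly p (u m)"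
    by (simp add: poly_prod)
  moreover have "poly (?T i) (u m) = 0" if "i < k" "i \<noteq> m" for i
    using that m vanish by simp
  ultimately have "(\<Sum>i<k. poly (?T i) (u m)) = (\<Sum>i<k. if i = m then poly p (u m) else 0)"
    by (intro sum.cong) auto
  also have "\<dots> = poly p (u m)"
    using m by simp
  finally show "poly p z = poly (Polynomial.smult (coeff p k) ?M + (\<Sum>i<k. ?T i)) z"
    unfolding m(2) poly_add poly_smult poly_sum using vanish[of "{..<k}"] m by simp
qed

text \<open>Interpolate \<open>\<Prod>j<k. q X - u j\<close> at the nodes \<open>u j\<close> and evaluate at \<open>0\<close>.\<close>
lemma sum_lagrange_q_ratios:
  fixes u :: "nat \<Rightarrow> 'a::field"
  assumes inj: "inj_on u {..<k}" and nz: "\<And>i. i < k \<Longrightarrow> u i \<noteq> 0" and q: "q \<noteq> 1"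
  shows "(\<Sum>i<k. \<Prod>j\<in>{..<k}-{i}. (q * u i - u j) / (u i - u j)) = (\<Sum>m<k. q ^ m)"
proof -
  define L where "L = (\<Prod>j<k. [:- u j, q:])"
  define U where "U = (\<Prod>j<k. - u j)"
  define R where "R i = (\<Prod>j\<in>{..<k}-{i}. (q * u i - u j) / (u i - u j))" for i
  have U: "U \<noteq> 0" unfolding U_def using nz by auto
  have L: "degree L \<le> k" "coeff L k = q ^ k"
    using degree_coeff_prod_linear[of "{..<k}" "\<lambda>j. - u j" "\<lambda>_. q"] unfolding L_def by auto
  have summand: "poly L (u i) / (\<Prod>j\<in>{..<k}-{i}. u i - u j) * poly (\<Prod>j\<in>{..<k}-{i}. [:- u j, 1:]) 0
      = (1 - q) * U * R i" if "i \<in> {..<k}" for i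
  proof -
    have i: "i < k" using that by simp
    have PL: "poly L (u i) = (q - 1) * u i * (\<Prod>j\<in>{..<k}-{i}. q * u i - u j)"
      unfolding L_def poly_prod using i by (subst prod.remove[of _ i]) (auto simp: algebra_simps)
    have PU: "U = - u i * (\<Prod>j\<in>{..<k}-{i}. - u j)"
      unfolding U_def using i by (subst prod.remove[of _ i]) auto
    have "(\<Prod>j\<in>{..<k}-{i}. u i - u j) \<noteq> 0"
      using inj i by (auto simp: inj_on_eq_iff)
    then show ?thesis
      unfolding R_def poly_prod prod_dividef PL PU by (simp add: field_simps)
  qed
  have "U = poly L 0"
    unfolding L_def U_def by (simp add: poly_prod)
  also have "\<dots> = q ^ k * U + (\<Sum>i<k. poly L (u i) / (\<Prod>j\<in>{..<k}-{i}. u i - u j)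
                                      * poly (\<Prod>j\<in>{..<k}-{i}. [:- u j, 1:]) 0)"
    by (subst lagrange_interpolation[OF inj L(1)]) (simp add: L(2) poly_sum poly_prod U_def)
  also have "\<dots> = q ^ k * U + (1 - q) * U * (\<Sum>i<k. R i)"
    by (simp only: sum.cong[OF refl summand] sum_distrib_left)
  finally have "U - q ^ k * U = (1 - q) * U * (\<Sum>i<k. R i)"
    by (simp only: diff_eq_eq add.commute)
  then have "U * ((1 - q) * (\<Sum>i<k. R i)) = U * (1 - q ^ k)"
    by (simp add: algebra_simps)
  then have "(1 - q) * (\<Sum>i<k. R i) = 1 - q ^ k"
    using U by simp
  also have "\<dots> = (1 - q) * (\<Sum>m<k. q ^ m)"
    by (simp add: one_diff_power_eq)
  finally show ?thesis
    unfolding R_def using q by simp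
qed

text \<open>The quantum integer \<open>(q^k - q^-k) / (q - q^-1)\<close> at \<open>q = exp (\<i> \<theta>)\<close>.\<close>
definition quantum_integer :: "nat \<Rightarrow> real \<Rightarrow> real" where
  "quantum_integer k \<theta> = (\<Sum>m<k. cos ((real k - 1 - 2 * real m) * \<theta>))"

lemma of_real_sin_cis: "complex_of_real (sin x) = (cis x - inverse (cis x)) / (2 * \<i>)"
  by (simp add: complex_eq_iff cis.ctr)

lemma sin_diff_shift_ratio_cis:
  assumes "sin (\<alpha> - \<beta>) \<noteq> 0"
  shows "cis \<alpha> ^ 2 \<noteq> cis \<beta> ^ 2"
    and "complex_of_real (sin (\<alpha> - \<beta> - \<theta>) / sin (\<alpha> - \<beta>))
         = cis \<theta> * (inverse (cis \<theta> ^ 2) * cis \<alpha> ^ 2 - cis \<beta> ^ 2) / (cis \<alpha> ^ 2 - cis \<beta> ^ 2)"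
proof -
  define a b t where "a = cis \<alpha>" and "b = cis \<beta>" and "t = cis \<theta>"
  have nz: "a \<noteq> 0" "b \<noteq> 0" "t \<noteq> 0" unfolding a_def b_def t_def by auto
  have s1: "complex_of_real (sin (\<alpha> - \<beta>)) = (a / b - b / a) / (2 * \<i>)"
    unfolding of_real_sin_cis a_def b_def by (simp add: cis_divide)
  have s2: "complex_of_real (sin (\<alpha> - \<beta> - \<theta>)) = (a / (b * t) - b * t / a) / (2 * \<i>)"
    unfolding of_real_sin_cis a_def b_def t_def by (simp add: cis_divide cis_mult algebra_simps)
  have "a / b - b / a \<noteq> 0"
    using assms s1 by (metis divide_eq_0_iff of_real_eq_0_iff)
  then have ab: "a ^ 2 - b ^ 2 \<noteq> 0"
    using nz by (simp add: field_simps power2_eq_square)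
  then show "cis \<alpha> ^ 2 \<noteq> cis \<beta> ^ 2"
    unfolding a_def b_def by simp
  have "complex_of_real (sin (\<alpha> - \<beta> - \<theta>) / sin (\<alpha> - \<beta>)) = (a / (b * t) - b * t / a) / (a / b - b / a)"
    by (simp add: s1 s2)
  also have "\<dots> = t * (inverse (t ^ 2) * a ^ 2 - b ^ 2) / (a ^ 2 - b ^ 2)"
    using nz ab by (simp add: field_simps power2_eq_square)
  finally show "complex_of_real (sin (\<alpha> - \<beta> - \<theta>) / sin (\<alpha> - \<beta>))
      = cis \<theta> * (inverse (cis \<theta> ^ 2) * cis \<alpha> ^ 2 - cis \<beta> ^ 2) / (cis \<alpha> ^ 2 - cis \<beta> ^ 2)"
    unfolding a_def b_def t_def .
qed

lemma cis_power_mult_inverse_power: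
  "m < k \<Longrightarrow> cis \<theta> ^ (k - 1) * inverse (cis \<theta> ^ 2) ^ m = cis ((real k - 1 - 2 * real m) * \<theta>)"
  by (simp add: Complex.DeMoivre cis_mult algebra_simps)

lemma sum_prod_sin_shift_ratio:
  fixes \<alpha> :: "nat \<Rightarrow> real"
  assumes distinct: "\<And>i j. i < k \<Longrightarrow> j < k \<Longrightarrow> i \<noteq> j \<Longrightarrow> sin (\<alpha> i - \<alpha> j) \<noteq> 0"
    and "sin \<theta> \<noteq> 0"
  shows "(\<Sum>i<k. \<Prod>j\<in>{..<k}-{i}. sin (\<alpha> i - \<alpha> j - \<theta>) / sin (\<alpha> i - \<alpha> j)) = quantum_integer k \<theta>"
proof -
  define t q where "t = cis \<theta>" and "q = inverse (t ^ 2)"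
  define u where "u i = cis (\<alpha> i) ^ 2" for i
  have inj: "inj_on u {..<k}"
    using sin_diff_shift_ratio_cis(1)[OF distinct] unfolding u_def by (auto intro: inj_onI)
  have u_nonzero: "u i \<noteq> 0" if "i < k" for i
    unfolding u_def by simp
  have q: "q \<noteq> 1"
  proof
    assume "q = 1"
    then have "t * t = 1"
      unfolding q_def by (metis inverse_1 inverse_inverse_eq power2_eq_square)
    then have "t - inverse t = 0"
      by (simp add: inverse_unique)
    then show False
      using \<open>sin \<theta> \<noteq> 0\<close> of_real_sin_cis[of \<theta>] unfolding t_def by simp
  qed
  have "complex_of_real (\<Sum>i<k. \<Prod>j\<in>{..<k}-{i}. sin (\<alpha> i - \<alpha> j - \<theta>) / sin (\<alpha> i - \<alpha> j))
      = (\<Sum>i<k. \<Prod>j\<in>{..<k}-{i}. t * ((q * u i - u j) / (u i - u j)))"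
    unfolding of_real_sum of_real_prod t_def q_def u_def
    by (intro sum.cong prod.cong refl, subst sin_diff_shift_ratio_cis(2)) (use distinct in auto)
  also have "\<dots> = t ^ (k - 1) * (\<Sum>i<k. \<Prod>j\<in>{..<k}-{i}. (q * u i - u j) / (u i - u j))"
    unfolding sum_distrib_left by (intro sum.cong refl) (simp only: prod.distrib prod_constant, simp)
  also have "\<dots> = (\<Sum>m<k. t ^ (k - 1) * q ^ m)"
    by (simp only: sum_lagrange_q_ratios[OF inj u_nonzero q] sum_distrib_left)
  also have "\<dots> = (\<Sum>m<k. cis ((real k - 1 - 2 * real m) * \<theta>))"
    unfolding t_def q_def by (intro sum.cong refl cis_power_mult_inverse_power) simp
  finally have "Re (complex_of_real (\<Sum>i<k. \<Prod>j\<in>{..<k}-{i}. sin (\<alpha> i - \<alpha> j - \<theta>) / sin (\<alpha> i - \<alpha> j)))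
      = Re (\<Sum>m<k. cis ((real k - 1 - 2 * real m) * \<theta>))"
    by (rule arg_cong)
  then show ?thesis
    by (simp only: Re_complex_of_real Re_sum cis.sel quantum_integer_def)
qed

lemma sin_mult_quantum_integer: "sin \<theta> * quantum_integer k \<theta> = sin (real k * \<theta>)"
proof -
  define f where "f m = sin ((real k - 2 * real m) * \<theta>)" for m
  have "f m - f (Suc m) = 2 * sin \<theta> * cos ((real k - 1 - 2 * real m) * \<theta>)" for m
  proof -
    have "((real k - 2 * real m) * \<theta> - (real k - 2 * real (Suc m)) * \<theta>) / 2 = \<theta>"
      and "((real k - 2 * real m) * \<theta> + (real k - 2 * real (Suc m)) * \<theta>) / 2
             = (real k - 1 - 2 * real m) * \<theta>"
      by (simp_all add: field_simps)
    then show ?thesis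
      unfolding f_def sin_diff_sin by simp
  qed
  then have "2 * sin \<theta> * quantum_integer k \<theta> = (\<Sum>m<k. f m - f (Suc m))"
    unfolding quantum_integer_def sum_distrib_left by simp
  also have "\<dots> = 2 * sin (real k * \<theta>)"
    by (simp only: sum_lessThan_telescope') (simp add: f_def algebra_simps)
  finally show ?thesis by simp
qed

section \<open>The sine Vandermonde product\<close>

definition sine_vandermonde :: "nat \<Rightarrow> (nat \<Rightarrow> real) \<Rightarrow> real" where
  "sine_vandermonde k \<alpha> = (\<Prod>j<k. \<Prod>i<j. sin (\<alpha> i - \<alpha> j))"

lemma sine_vandermonde_Sigma:
  "sine_vandermonde k \<alpha> = (\<Prod>p\<in>(SIGMA j:{..<k}. {..<j}). sin (\<alpha> (snd p) - \<alpha> (fst p)))"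
  unfolding sine_vandermonde_def by (subst prod.Sigma) (auto simp: split_def)

lemma sine_vandermonde_cong:
  "(\<And>j. j < k \<Longrightarrow> \<alpha> j = \<beta> j) \<Longrightarrow> sine_vandermonde k \<alpha> = sine_vandermonde k \<beta>"
  unfolding sine_vandermonde_def by (intro prod.cong refl) auto

lemma sine_vandermonde_eq_0:
  "i < j \<Longrightarrow> j < k \<Longrightarrow> sin (\<alpha> i - \<alpha> j) = 0 \<Longrightarrow> sine_vandermonde k \<alpha> = 0"
  unfolding sine_vandermonde_def by (intro prod_zero) auto

lemma sine_vandermonde_pos:
  "(\<And>i j. i < j \<Longrightarrow> j < k \<Longrightarrow> 0 < \<alpha> i - \<alpha> j \<and> \<alpha> i - \<alpha> j < pi) \<Longrightarrow> 0 < sine_vandermonde k \<alpha>"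
  unfolding sine_vandermonde_def by (intro prod_pos) (auto intro: sin_gt_zero)

lemma sine_vandermonde_Suc:
  "sine_vandermonde (Suc m) \<alpha> = (\<Prod>j<m. sin (\<alpha> 0 - \<alpha> (Suc j))) * sine_vandermonde m (\<lambda>j. \<alpha> (Suc j))"
proof -
  have "sine_vandermonde (Suc m) \<alpha> = (\<Prod>j<m. \<Prod>i<Suc j. sin (\<alpha> i - \<alpha> (Suc j)))"
    unfolding sine_vandermonde_def by (subst prod.lessThan_Suc_shift) simp
  also have "\<dots> = (\<Prod>j<m. sin (\<alpha> 0 - \<alpha> (Suc j)) * (\<Prod>i<j. sin (\<alpha> (Suc i) - \<alpha> (Suc j))))"
    by (intro prod.cong refl) (simp only: prod.lessThan_Suc_shift)
  finally show ?thesis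
    unfolding sine_vandermonde_def prod.distrib .
qed

lemma sine_vandermonde_rotate:
  "sine_vandermonde (Suc m) (\<lambda>j. if j = 0 then \<alpha> m + pi else \<alpha> (j - 1)) = sine_vandermonde (Suc m) \<alpha>"
proof -
  have "sin (\<alpha> m + pi - \<alpha> j) = sin (\<alpha> j - \<alpha> m)" for j
    using sin_minus[of "\<alpha> j - \<alpha> m"] sin_periodic_pi[of "\<alpha> m - \<alpha> j"] by (simp add: algebra_simps)
  then have "sine_vandermonde (Suc m) (\<lambda>j. if j = 0 then \<alpha> m + pi else \<alpha> (j - 1))
      = (\<Prod>j<m. sin (\<alpha> j - \<alpha> m)) * sine_vandermonde m \<alpha>"
    by (simp add: sine_vandermonde_Suc)
  also have "\<dots> = sine_vandermonde (Suc m) \<alpha>"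
    unfolding sine_vandermonde_def by (simp add: mult.commute)
  finally show ?thesis .
qed

lemma sine_vandermonde_shift:
  fixes \<alpha> :: "nat \<Rightarrow> real"
  assumes i0: "i0 < k"
    and distinct: "\<And>i j. i < k \<Longrightarrow> j < k \<Longrightarrow> i \<noteq> j \<Longrightarrow> sin (\<alpha> i - \<alpha> j) \<noteq> 0"
  shows "sine_vandermonde k (\<alpha>(i0 := \<alpha> i0 - \<theta>))
       = sine_vandermonde k \<alpha> * (\<Prod>j\<in>{..<k}-{i0}. sin (\<alpha> i0 - \<alpha> j - \<theta>) / sin (\<alpha> i0 - \<alpha> j))"
proof -
  define S where "S = (SIGMA j:{..<k}. {..<j})"
  define g where "g j = sin (\<alpha> i0 - \<alpha> j - \<theta>) / sin (\<alpha> i0 - \<alpha> j)" for j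
  define h where "h p = (if snd p = i0 then g (fst p) else if fst p = i0 then g (snd p) else 1)" for p
  let ?\<beta> = "\<alpha>(i0 := \<alpha> i0 - \<theta>)"
  have factor: "sin (?\<beta> (snd p) - ?\<beta> (fst p)) = sin (\<alpha> (snd p) - \<alpha> (fst p)) * h p" if "p \<in> S" for p
  proof -
    obtain j i where p: "p = (j, i)" and ij: "i < j" "j < k"
      using \<open>p \<in> S\<close> unfolding S_def by auto
    have "sin (\<alpha> i0 - \<alpha> l) \<noteq> 0" if "l < k" "l \<noteq> i0" for l
      using distinct i0 that by auto
    moreover have "sin (\<alpha> i - (\<alpha> i0 - \<theta>)) = - sin (\<alpha> i0 - \<alpha> i - \<theta>)"
      and "sin (\<alpha> i - \<alpha> i0) = - sin (\<alpha> i0 - \<alpha> i)"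
      using sin_minus[of "\<alpha> i0 - \<alpha> i - \<theta>"] sin_minus[of "\<alpha> i0 - \<alpha> i"] by (simp_all add: algebra_simps)
    ultimately show ?thesis
      using ij unfolding p h_def g_def by (auto simp: algebra_simps)
  qed
  have "sine_vandermonde k ?\<beta> = sine_vandermonde k \<alpha> * (\<Prod>p\<in>S. h p)"
    unfolding sine_vandermonde_Sigma S_def[symmetric] prod.distrib[symmetric]
    by (intro prod.cong refl factor)
  also have "(\<Prod>p\<in>S. h p) = (\<Prod>p\<in>S \<inter> {p. fst p = i0 \<or> snd p = i0}. h p)"
    by (rule prod.mono_neutral_right) (auto simp: S_def h_def)
  also have "\<dots> = (\<Prod>j\<in>{..<k}-{i0}. g j)"
    by (rule prod.reindex_bij_witness[of _ "\<lambda>j. if j < i0 then (i0, j) else (j, i0)"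
          "\<lambda>p. if fst p = i0 then snd p else fst p"])
      (use i0 in \<open>auto simp: S_def h_def split: if_splits\<close>)
  finally show ?thesis
    unfolding g_def .
qed

lemma sum_sine_vandermonde_shifts:
  fixes \<alpha> :: "nat \<Rightarrow> real"
  assumes distinct: "\<And>i j. i < k \<Longrightarrow> j < k \<Longrightarrow> i \<noteq> j \<Longrightarrow> sin (\<alpha> i - \<alpha> j) \<noteq> 0"
    and "sin \<theta> \<noteq> 0"
  shows "(\<Sum>i<k. sine_vandermonde k (\<alpha>(i := \<alpha> i - \<theta>))) = quantum_integer k \<theta> * sine_vandermonde k \<alpha>"
proof -
  have "(\<Sum>i<k. sine_vandermonde k (\<alpha>(i := \<alpha> i - \<theta>)))
      = sine_vandermonde k \<alpha> * (\<Sum>i<k. \<Prod>j\<in>{..<k}-{i}. sin (\<alpha> i - \<alpha> j - \<theta>) / sin (\<alpha> i - \<alpha> j))"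
    unfolding sum_distrib_left by (intro sum.cong refl sine_vandermonde_shift) (use distinct in auto)
  then show ?thesis
    using sum_prod_sin_shift_ratio[OF distinct \<open>sin \<theta> \<noteq> 0\<close>] by simp
qed

section \<open>Predecessors of a partition\<close>

lemma partitions_length: "l \<in> partitions k n \<Longrightarrow> length l = k"
  unfolding partitions_def by auto

lemma partitions_nth_le: "l \<in> partitions k n \<Longrightarrow> i < k \<Longrightarrow> l ! i \<le> n - k"
  unfolding partitions_def by auto

lemma partitions_nth_antimono: "l \<in> partitions k n \<Longrightarrow> i \<le> j \<Longrightarrow> j < k \<Longrightarrow> l ! j \<le> l ! i"
  unfolding partitions_def using sorted_wrt_nth_less[of "(\<ge>)" l i j] by (cases "i = j") auto

lemma partitionsI:
  assumes "length l = k" "\<And>i. i < k \<Longrightarrow> l ! i \<le> n - k" "\<And>i j. i < j \<Longrightarrow> j < k \<Longrightarrow> l ! j \<le> l ! i"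
  shows "l \<in> partitions k n"
  unfolding partitions_def using assms by (auto simp: sorted_wrt_iff_nth_less in_set_conv_nth)

lemma finite_partitions: "finite (partitions k n)"
proof -
  have "partitions k n \<subseteq> {l. set l \<subseteq> {..n - k} \<and> length l = k}"
    unfolding partitions_def by auto
  then show ?thesis
    using finite_lists_length_eq[of "{..n - k}" k] finite_subset by blast
qed

definition remove_box :: "nat list \<Rightarrow> nat \<Rightarrow> nat list" where
  "remove_box mu i = mu[i := mu ! i - 1]"

text \<open>The inverse of \<open>pstar\<close>: the partition \<open>\<lambda>\<close> with \<open>\<lambda>* = \<mu>\<close>, whenever there is one.\<close>
definition unstar :: "nat \<Rightarrow> nat \<Rightarrow> nat list \<Rightarrow> nat list" where
  "unstar k n mu = (n - k) # map Suc (butlast mu)"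

definition removable :: "nat \<Rightarrow> nat \<Rightarrow> nat list \<Rightarrow> nat \<Rightarrow> bool" where
  "removable k n mu i \<longleftrightarrow> 0 < mu ! i \<and> remove_box mu i \<in> partitions k n"

definition has_unstar :: "nat \<Rightarrow> nat \<Rightarrow> nat list \<Rightarrow> bool" where
  "has_unstar k n mu \<longleftrightarrow> last mu = 0 \<and> unstar k n mu \<in> partitions k n"

definition predecessor_sum :: "nat \<Rightarrow> nat \<Rightarrow> (nat list \<Rightarrow> 'a::comm_monoid_add) \<Rightarrow> nat list \<Rightarrow> 'a" where
  "predecessor_sum k n v mu =
     (\<Sum>i<k. if removable k n mu i then v (remove_box mu i) else 0)
     + (if has_unstar k n mu then v (unstar k n mu) else 0)"

definition predecessor_count :: "nat \<Rightarrow> nat \<Rightarrow> nat list \<Rightarrow> nat" where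
  "predecessor_count k n mu = card {i \<in> {..<k}. removable k n mu i} + (if has_unstar k n mu then 1 else 0)"

lemma length_remove_box [simp]: "length (remove_box mu i) = length mu"
  unfolding remove_box_def by simp

lemma nth_remove_box: "i < length mu \<Longrightarrow> remove_box mu i ! j = (if j = i then mu ! i - 1 else mu ! j)"
  unfolding remove_box_def by simp

lemma inj_on_remove_box: "inj_on (remove_box mu) {i. i < length mu \<and> 0 < mu ! i}"
proof (rule inj_onI)
  fix i j assume "i \<in> {i. i < length mu \<and> 0 < mu ! i}" "j \<in> {i. i < length mu \<and> 0 < mu ! i}"
    and "remove_box mu i = remove_box mu j"
  then have "remove_box mu i ! i = remove_box mu j ! i" "i < length mu" "j < length mu" "0 < mu ! i"
    by auto
  then show "i = j"
    by (auto simp: nth_remove_box split: if_splits)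
qed

lemma sum_list_remove_box: "i < length mu \<Longrightarrow> 0 < mu ! i \<Longrightarrow> sum_list (remove_box mu i) + 1 = sum_list mu"
  using elem_le_sum_list[of i mu] unfolding remove_box_def by (simp add: sum_list_update)

lemma pcontained_psize_Suc_imp_remove_box:
  assumes "pcontained lam mu" "Defs.psize mu = Defs.psize lam + 1"
  obtains i where "i < length mu" "0 < mu ! i" "lam = remove_box mu i"
proof -
  have len: "length lam = length mu" and le: "\<And>i. i < length mu \<Longrightarrow> lam ! i \<le> mu ! i"
    using assms(1) unfolding pcontained_def by auto
  have "\<exists>i<length mu. lam ! i < mu ! i"
  proof (rule ccontr)
    assume "\<not> (\<exists>i<length mu. lam ! i < mu ! i)"
    then have "lam ! i = mu ! i" if "i < length mu" for i
      using le[OF that] that by (meson le_antisym not_less)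
    then have "lam = mu"
      using len by (intro nth_equalityI) auto
    then show False
      using assms(2) by simp
  qed
  then obtain i where i: "i < length mu" "lam ! i < mu ! i"
    by blast
  have le_box: "lam ! j \<le> remove_box mu i ! j" if "j < length mu" for j
    using i le[OF that] by (auto simp: nth_remove_box)
  have "sum_list (remove_box mu i) = sum_list lam"
    using sum_list_remove_box[of i mu] i assms(2) unfolding Defs.psize_def by simp
  have "(\<Sum>j<length mu. remove_box mu i ! j - lam ! j)
      = (\<Sum>j<length mu. remove_box mu i ! j) - (\<Sum>j<length mu. lam ! j)"
    using le_box by (intro sum_subtractf_nat) auto
  also have "\<dots> = 0"
    using \<open>sum_list (remove_box mu i) = sum_list lam\<close> len by (simp add: sum_list_sum_nth atLeast0LessThan)
  finally have ge_box: "remove_box mu i ! j \<le> lam ! j" if "j < length mu" for j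
    using that by simp
  have "lam = remove_box mu i"
    using len le_box ge_box by (intro nth_equalityI) (auto intro: le_antisym)
  then show thesis
    using i that by simp
qed

lemma box_predecessors:
  assumes mu: "mu \<in> partitions k n"
  shows "{lam \<in> partitions k n. mu \<in> partitions k n \<and> Defs.psize mu = Defs.psize lam + 1 \<and> pcontained lam mu}
       = remove_box mu ` {i \<in> {..<k}. removable k n mu i}"
proof (intro equalityI subsetI)
  fix lam
  assume "lam \<in> {lam \<in> partitions k n.
      mu \<in> partitions k n \<and> Defs.psize mu = Defs.psize lam + 1 \<and> pcontained lam mu}"
  then have lam: "lam \<in> partitions k n" and size: "Defs.psize mu = Defs.psize lam + 1"
    and contained: "pcontained lam mu"
    by auto
  obtain i where "i < length mu" "0 < mu ! i" "lam = remove_box mu i"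
    by (rule pcontained_psize_Suc_imp_remove_box[OF contained size])
  then show "lam \<in> remove_box mu ` {i \<in> {..<k}. removable k n mu i}"
    using lam partitions_length[OF mu] unfolding removable_def by auto
next
  fix lam assume "lam \<in> remove_box mu ` {i \<in> {..<k}. removable k n mu i}"
  then obtain i where i: "i < k" "0 < mu ! i" "remove_box mu i \<in> partitions k n" and lam: "lam = remove_box mu i"
    unfolding removable_def by auto
  have "length mu = k"
    using partitions_length[OF mu] .
  then show "lam \<in> {lam \<in> partitions k n.
      mu \<in> partitions k n \<and> Defs.psize mu = Defs.psize lam + 1 \<and> pcontained lam mu}"
    using i mu sum_list_remove_box[of i mu]
    unfolding lam pcontained_def Defs.psize_def by (auto simp: nth_remove_box)
qed

lemma last_unstar_pos: "length mu = k \<Longrightarrow> k < n \<Longrightarrow> 0 < last (unstar k n mu)"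
  unfolding unstar_def by (cases "butlast mu = []") (simp_all add: last_map)

lemma pstar_unstar: "mu \<noteq> [] \<Longrightarrow> last mu = 0 \<Longrightarrow> pstar (unstar k n mu) = mu"
  unfolding pstar_def unstar_def by (simp add: comp_def) (metis append_butlast_last_id)

lemma unstar_pstar:
  assumes lam: "lam \<in> partitions k n" and star: "star_exists k n lam"
  shows "unstar k n (pstar lam) = lam"
proof -
  have ne: "lam \<noteq> []" and hd: "hd lam = n - k" and last: "0 < last lam"
    using star unfolding star_exists_def by auto
  have "last lam \<le> x" if x: "x \<in> set (tl lam)" for x
  proof -
    obtain j where j: "j < length (tl lam)" "x = tl lam ! j"
      using x by (auto simp: in_set_conv_nth)
    then show ?thesis
      using ne partitions_nth_antimono[OF lam, of "Suc j" "length lam - 1"] partitions_length[OF lam]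
      by (simp add: last_conv_nth nth_tl)
  qed
  then have "map Suc (map (\<lambda>x. x - 1) (tl lam)) = tl lam"
    unfolding map_map using last by (intro map_idI) fastforce
  moreover have "hd lam # tl lam = lam"
    using ne by (rule list.collapse)
  ultimately show ?thesis
    using hd unfolding unstar_def pstar_def by simp
qed

lemma pstar_preimage:
  assumes mu: "mu \<in> partitions k n" and k: "1 \<le> k" "k < n"
  shows "{lam \<in> partitions k n. star_exists k n lam \<and> mu = pstar lam}
       = (if has_unstar k n mu then {unstar k n mu} else {})"
proof -
  have ne: "mu \<noteq> []"
    using partitions_length[OF mu] k by auto
  have preimage: "lam = unstar k n mu \<and> has_unstar k n mu"
    if lam: "lam \<in> partitions k n" "star_exists k n lam" and mu_eq: "mu = pstar lam" for lam
  proof -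
    have "unstar k n mu = lam"
      unfolding mu_eq by (rule unstar_pstar[OF lam])
    moreover have "last mu = 0"
      unfolding mu_eq pstar_def by simp
    ultimately show ?thesis
      using lam unfolding has_unstar_def by simp
  qed
  have unstar: "star_exists k n (unstar k n mu) \<and> mu = pstar (unstar k n mu)" if "last mu = 0"
  proof -
    have "0 < last (unstar k n mu)"
      using last_unstar_pos[OF partitions_length[OF mu] k(2)] .
    then show ?thesis
      using pstar_unstar[OF ne that] unfolding star_exists_def by (simp add: unstar_def)
  qed
  show ?thesis
  proof (cases "has_unstar k n mu")
    case True
    have "{lam \<in> partitions k n. star_exists k n lam \<and> mu = pstar lam} = {unstar k n mu}"
    proof (intro equalityI subsetI)
      fix lam assume "lam \<in> {lam \<in> partitions k n. star_exists k n lam \<and> mu = pstar lam}"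
      then show "lam \<in> {unstar k n mu}"
        using preimage by blast
    next
      fix lam assume "lam \<in> {unstar k n mu}"
      then show "lam \<in> {lam \<in> partitions k n. star_exists k n lam \<and> mu = pstar lam}"
        using True unstar unfolding has_unstar_def by blast
    qed
    then show ?thesis
      using True by simp
  next
    case False
    then have "{lam \<in> partitions k n. star_exists k n lam \<and> mu = pstar lam} = {}"
      using preimage by blast
    then show ?thesis
      using False by simp
  qed
qed

lemma c1_hat_row:
  fixes v :: "nat list \<Rightarrow> complex"
  assumes mu: "mu \<in> partitions k n" and k: "1 \<le> k" "k < n"
  shows "(\<Sum>lam\<in>partitions k n. c1_hat_coeff k n mu lam * v lam) = of_nat n * predecessor_sum k n v mu"
proof -
  let ?P = "partitions k n"
  have sum_filter: "(\<Sum>lam\<in>?P. (if Q lam then of_nat n else 0) * v lam)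
      = of_nat n * (\<Sum>lam\<in>{lam \<in> ?P. Q lam}. v lam)" for Q
    unfolding sum_distrib_left sum.inter_filter[OF finite_partitions] by (intro sum.cong) auto
  have star_sum: "(\<Sum>lam\<in>{lam \<in> ?P. star_exists k n lam \<and> mu = pstar lam}. v lam)
      = (if has_unstar k n mu then v (unstar k n mu) else 0)"
    unfolding pstar_preimage[OF mu k] by simp
  have "inj_on (remove_box mu) {i \<in> {..<k}. removable k n mu i}"
    by (rule inj_on_subset[OF inj_on_remove_box]) (auto simp: removable_def partitions_length[OF mu])
  note reindex = sum.reindex[OF this]
  have box_sum: "(\<Sum>lam\<in>{lam \<in> ?P. mu \<in> ?P \<and> Defs.psize mu = Defs.psize lam + 1 \<and> pcontained lam mu}. v lam)
      = (\<Sum>i<k. if removable k n mu i then v (remove_box mu i) else 0)"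
    unfolding box_predecessors[OF mu] reindex comp_def by (rule sum.inter_filter) simp
  show ?thesis
    unfolding c1_hat_coeff_def distrib_right sum.distrib sum_filter star_sum box_sum predecessor_sum_def
    by (simp only: distrib_left add.commute)
qed

section \<open>The sine eigenvector\<close>

definition partition_angles :: "real \<Rightarrow> nat \<Rightarrow> nat list \<Rightarrow> nat \<Rightarrow> real" where
  "partition_angles \<theta> k l i = \<theta> * (real (l ! i) + real (k - 1 - i))"

definition sine_eigenvector :: "nat \<Rightarrow> nat \<Rightarrow> nat list \<Rightarrow> real" where
  "sine_eigenvector k n l = sine_vandermonde k (partition_angles (pi / real n) k l)"

lemma partition_angles_diff_bounds:
  assumes mu: "mu \<in> partitions k n" and ij: "i < j" "j < k" and kn: "k < n"
  shows "0 < partition_angles (pi / real n) k mu i - partition_angles (pi / real n) k mu j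
       \<and> partition_angles (pi / real n) k mu i - partition_angles (pi / real n) k mu j < pi"
proof -
  define d where "d = real (mu ! i) - real (mu ! j) + (real j - real i)"
  have "mu ! j \<le> mu ! i" "mu ! i \<le> n - k"
    using partitions_nth_antimono[OF mu, of i j] partitions_nth_le[OF mu, of i] ij by auto
  then have d: "0 < d" "d < real n"
    using ij kn unfolding d_def by linarith+
  have diff: "partition_angles \<theta> k mu i - partition_angles \<theta> k mu j = \<theta> * d" for \<theta>
    using ij unfolding partition_angles_def d_def by (simp add: algebra_simps)
  have "pi / real n * d < pi / real n * real n"
    using d kn by (intro mult_strict_left_mono) auto
  then show ?thesis
    unfolding diff using d kn by simp
qed

lemma sin_partition_angles_diff_pos:
  "mu \<in> partitions k n \<Longrightarrow> i < j \<Longrightarrow> j < k \<Longrightarrow> k < n \<Longrightarrow>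
   0 < sin (partition_angles (pi / real n) k mu i - partition_angles (pi / real n) k mu j)"
  using partition_angles_diff_bounds by (blast intro: sin_gt_zero)

lemma sin_partition_angles_diff_neq_0:
  assumes "mu \<in> partitions k n" "k < n" "i < k" "j < k" "i \<noteq> j"
  shows "sin (partition_angles (pi / real n) k mu i - partition_angles (pi / real n) k mu j) \<noteq> 0"
proof (cases "i < j")
  case True
  then show ?thesis
    using sin_partition_angles_diff_pos assms by (metis order.irrefl)
next
  case False
  then have "0 < sin (partition_angles (pi / real n) k mu j - partition_angles (pi / real n) k mu i)"
    using sin_partition_angles_diff_pos assms by (metis linorder_neqE_nat)
  then show ?thesis
    by (metis minus_diff_eq neg_0_less_iff_less sin_minus order.irrefl)
qed

lemma sine_eigenvector_pos:
  assumes "mu \<in> partitions k n" "k < n"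
  shows "0 < sine_eigenvector k n mu"
  unfolding sine_eigenvector_def using assms partition_angles_diff_bounds
  by (blast intro: sine_vandermonde_pos)

lemma partition_angles_remove_box:
  assumes "i < length mu" "0 < mu ! i"
  shows "partition_angles \<theta> k (remove_box mu i)
       = (partition_angles \<theta> k mu)(i := partition_angles \<theta> k mu i - \<theta>)"
proof
  fix j
  show "partition_angles \<theta> k (remove_box mu i) j
      = ((partition_angles \<theta> k mu)(i := partition_angles \<theta> k mu i - \<theta>)) j"
    using assms unfolding partition_angles_def by (auto simp: nth_remove_box algebra_simps)
qed

lemma remove_box_in_partitions:
  assumes mu: "mu \<in> partitions k n" and i: "i < k" "0 < mu ! i"
    and next_smaller: "Suc i < k \<Longrightarrow> mu ! Suc i < mu ! i"
  shows "remove_box mu i \<in> partitions k n"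
proof (rule partitionsI)
  have len: "length mu = k"
    using partitions_length[OF mu] .
  then show "length (remove_box mu i) = k"
    by simp
  show "remove_box mu i ! p \<le> n - k" if "p < k" for p
    using partitions_nth_le[OF mu that] len i that by (auto simp: nth_remove_box)
  show "remove_box mu i ! q \<le> remove_box mu i ! p" if "p < q" "q < k" for p q
    using that len i next_smaller
      partitions_nth_antimono[OF mu, of p q] partitions_nth_antimono[OF mu, of "Suc i" q]
    by (auto simp: nth_remove_box)
qed

lemma nth_unstar: "0 < j \<Longrightarrow> j < length mu \<Longrightarrow> unstar k n mu ! j = Suc (mu ! (j - 1))"
  unfolding unstar_def by (cases j) (auto simp: nth_butlast)

lemma unstar_in_partitions:
  assumes mu: "mu \<in> partitions k n" and k: "1 \<le> k" and room: "k = 1 \<or> mu ! 0 < n - k"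
  shows "unstar k n mu \<in> partitions k n"
proof (rule partitionsI)
  have len: "length mu = k"
    using partitions_length[OF mu] .
  then show "length (unstar k n mu) = k"
    using k by (simp add: unstar_def)
  have below_first: "unstar k n mu ! p = Suc (mu ! (p - 1)) \<and> Suc (mu ! (p - 1)) \<le> n - k"
    if "0 < p" "p < k" for p
  proof -
    have "mu ! (p - 1) \<le> mu ! 0"
      using partitions_nth_antimono[OF mu, of 0 "p - 1"] that by simp
    moreover have "mu ! 0 < n - k"
      using room that by auto
    ultimately show ?thesis
      using nth_unstar[of p mu] that len by simp
  qed
  show "unstar k n mu ! p \<le> n - k" if "p < k" for p
    using below_first[of p] that by (cases "p = 0") (auto simp: unstar_def)
  show "unstar k n mu ! q \<le> unstar k n mu ! p" if "p < q" "q < k" for p q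
  proof (cases "p = 0")
    case True
    then show ?thesis
      using below_first[of q] that by (simp add: unstar_def)
  next
    case False
    then show ?thesis
      using below_first[of p] below_first[of q] that partitions_nth_antimono[OF mu, of "p - 1" "q - 1"]
      by auto
  qed
qed

lemma sine_eigenvector_unstar:
  assumes mu: "mu \<in> partitions k n" and k: "1 \<le> k" "k < n" and last: "last mu = 0"
  defines "\<alpha> \<equiv> partition_angles (pi / real n) k mu"
  shows "sine_eigenvector k n (unstar k n mu) = sine_vandermonde k (\<alpha>(k - 1 := \<alpha> (k - 1) - pi / real n))"
proof -
  obtain m where m: "k = Suc m"
    using k by (cases k) auto
  let ?\<beta> = "\<alpha>(m := \<alpha> m - pi / real n)"
  have len: "length mu = Suc m"
    using partitions_length[OF mu] m by simp
  moreover have "mu \<noteq> []"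
    using len by auto
  ultimately have "mu ! m = 0"
    using last by (simp add: last_conv_nth)
  then have "partition_angles (pi / real n) k (unstar k n mu) j = (if j = 0 then ?\<beta> m + pi else ?\<beta> (j - 1))"
    if "j < Suc m" for j
    using that len k m unfolding \<alpha>_def partition_angles_def
    by (cases "j = 0") (auto simp: unstar_def nth_butlast field_simps)
  then have "sine_eigenvector k n (unstar k n mu)
      = sine_vandermonde (Suc m) (\<lambda>j. if j = 0 then ?\<beta> m + pi else ?\<beta> (j - 1))"
    unfolding sine_eigenvector_def m by (intro sine_vandermonde_cong) auto
  then show ?thesis
    unfolding sine_vandermonde_rotate m by simp
qed

lemma sin_pi_div_pos: "1 < n \<Longrightarrow> 0 < sin (pi / real n)"
  by (intro sin_gt_zero) (simp_all add: field_simps)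

lemma not_removable_cases:
  assumes mu: "mu \<in> partitions k n" and i: "i < k" and not_removable: "\<not> removable k n mu i"
  obtains (equal_next) "Suc i < k" "mu ! Suc i = mu ! i"
    | (last_empty) "i = k - 1" "mu ! i = 0"
proof (cases "0 < mu ! i")
  case True
  then have "Suc i < k \<and> \<not> mu ! Suc i < mu ! i"
    using remove_box_in_partitions[OF mu i True] not_removable unfolding removable_def by blast
  then show thesis
    using equal_next partitions_nth_antimono[OF mu, of i "Suc i"] by simp
next
  case False
  then show thesis
    using equal_next last_empty partitions_nth_antimono[OF mu, of i "Suc i"] i
    by (metis Suc_lessI diff_Suc_1 le_zero_eq not_gr0 le_add2 plus_1_eq_Suc)
qed

lemma sine_vandermonde_shift_equal_next:
  fixes \<theta> :: real
  assumes mu: "mu \<in> partitions k n" and i: "Suc i < k" "mu ! Suc i = mu ! i"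
  defines "\<alpha> \<equiv> partition_angles \<theta> k mu"
  shows "sine_vandermonde k (\<alpha>(i := \<alpha> i - \<theta>)) = 0"
proof (rule sine_vandermonde_eq_0[of i "Suc i"])
  have "real (k - 1 - i) = real (k - 1 - Suc i) + 1"
    using i by simp
  then show "sin ((\<alpha>(i := \<alpha> i - \<theta>)) i - (\<alpha>(i := \<alpha> i - \<theta>)) (Suc i)) = 0"
    using i unfolding \<alpha>_def partition_angles_def by (simp add: algebra_simps)
qed (use i in auto)

lemma sine_vandermonde_shift_full_first_row:
  assumes k: "2 \<le> k" "k < n" and first: "mu ! 0 = n - k" and last: "mu ! (k - 1) = 0"
  defines "\<alpha> \<equiv> partition_angles (pi / real n) k mu"
  shows "sine_vandermonde k (\<alpha>(k - 1 := \<alpha> (k - 1) - pi / real n)) = 0"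
proof (rule sine_vandermonde_eq_0[of 0 "k - 1"])
  have "\<alpha> 0 - (\<alpha> (k - 1) - pi / real n) = pi"
    using k first last unfolding \<alpha>_def partition_angles_def by (simp add: field_simps)
  then show "sin ((\<alpha>(k - 1 := \<alpha> (k - 1) - pi / real n)) 0
      - (\<alpha>(k - 1 := \<alpha> (k - 1) - pi / real n)) (k - 1)) = 0"
    using k by simp
qed (use k in auto)

lemma last_row_term_eq_shift:
  assumes mu: "mu \<in> partitions k n" and k: "1 \<le> k" "k < n" and last_row: "mu ! (k - 1) = 0"
  defines "\<alpha> \<equiv> partition_angles (pi / real n) k mu"
  shows "(if has_unstar k n mu then sine_eigenvector k n (unstar k n mu) else 0)
       = sine_vandermonde k (\<alpha>(k - 1 := \<alpha> (k - 1) - pi / real n))"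
proof -
  have last: "last mu = 0"
    using partitions_length[OF mu] k last_row by (cases mu rule: rev_cases) (auto simp: nth_append)
  show ?thesis
  proof (cases "has_unstar k n mu")
    case True
    then show ?thesis
      using sine_eigenvector_unstar[OF mu k last] unfolding \<alpha>_def by simp
  next
    case False
    then have "\<not> (k = 1 \<or> mu ! 0 < n - k)"
      using unstar_in_partitions[OF mu k(1)] last unfolding has_unstar_def by auto
    then have "2 \<le> k" "mu ! 0 = n - k"
      using partitions_nth_le[OF mu, of 0] k by auto
    then show ?thesis
      using False sine_vandermonde_shift_full_first_row[of k n mu] k last_row unfolding \<alpha>_def by simp
  qed
qed

text \<open>The wrap-around term \<open>\<lambda>* = \<mu>\<close> is attached to the last row.\<close>
lemma predecessor_term_eq_shift:
  assumes mu: "mu \<in> partitions k n" and k: "1 \<le> k" "k < n" and i: "i < k"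
  defines "\<alpha> \<equiv> partition_angles (pi / real n) k mu"
  shows "(if removable k n mu i then sine_eigenvector k n (remove_box mu i) else 0)
         + (if i = k - 1 \<and> has_unstar k n mu then sine_eigenvector k n (unstar k n mu) else 0)
       = sine_vandermonde k (\<alpha>(i := \<alpha> i - pi / real n))"
proof (cases "removable k n mu i")
  case True
  have "last mu = mu ! (k - 1)"
    using partitions_length[OF mu] k by (cases mu rule: rev_cases) (auto simp: nth_append)
  then have "\<not> (i = k - 1 \<and> has_unstar k n mu)"
    using True unfolding removable_def has_unstar_def by auto
  moreover have "sine_eigenvector k n (remove_box mu i) = sine_vandermonde k (\<alpha>(i := \<alpha> i - pi / real n))"
    using True i partitions_length[OF mu] unfolding sine_eigenvector_def \<alpha>_def removable_def
    by (simp add: partition_angles_remove_box)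
  ultimately show ?thesis
    using True by auto
next
  case not_removable: False
  from mu i not_removable show ?thesis
  proof (cases rule: not_removable_cases)
    case equal_next
    then have "i \<noteq> k - 1"
      by simp
    then show ?thesis
      using not_removable sine_vandermonde_shift_equal_next[OF mu equal_next] unfolding \<alpha>_def by simp
  next
    case last_empty
    then show ?thesis
      using not_removable last_row_term_eq_shift[OF mu k] unfolding \<alpha>_def by simp
  qed
qed

lemma predecessor_sum_sine_eigenvector:
  assumes mu: "mu \<in> partitions k n" and k: "1 \<le> k" "k < n"
  shows "predecessor_sum k n (sine_eigenvector k n) mu
       = quantum_integer k (pi / real n) * sine_eigenvector k n mu"
proof -
  define \<alpha> where "\<alpha> = partition_angles (pi / real n) k mu"
  have "predecessor_sum k n (sine_eigenvector k n) mu
      = (\<Sum>i<k. (if removable k n mu i then sine_eigenvector k n (remove_box mu i) else 0)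
          + (if i = k - 1 \<and> has_unstar k n mu then sine_eigenvector k n (unstar k n mu) else 0))"
    unfolding predecessor_sum_def sum.distrib using k by (simp add: sum.delta_remove)
  also have "\<dots> = (\<Sum>i<k. sine_vandermonde k (\<alpha>(i := \<alpha> i - pi / real n)))"
    unfolding \<alpha>_def by (intro sum.cong refl predecessor_term_eq_shift[OF mu k]) simp
  also have "\<dots> = quantum_integer k (pi / real n) * sine_eigenvector k n mu"
    unfolding sine_eigenvector_def \<alpha>_def
  proof (rule sum_sine_vandermonde_shifts)
    show "sin (pi / real n) \<noteq> 0"
      using sin_pi_div_pos[of n] k by simp
  qed (use sin_partition_angles_diff_neq_0[OF mu k(2)] in auto)
  finally show ?thesis .
qed

lemma predecessor_sum_of_real:
  "predecessor_sum k n (\<lambda>l. of_real (v l)) mu = of_real (predecessor_sum k n v mu)"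
  unfolding predecessor_sum_def by (auto intro!: sum.cong)

lemma c1_hat_eigenvalue_sine_eigenvector:
  assumes k: "1 \<le> k" "k < n"
  shows "c1_hat_eigenvalue k n (of_real (real n * quantum_integer k (pi / real n)))"
  unfolding c1_hat_eigenvalue_def
proof (intro exI conjI ballI)
  let ?v = "\<lambda>l. complex_of_real (sine_eigenvector k n l)"
  have zero: "replicate k 0 \<in> partitions k n"
    by (rule partitionsI) auto
  then have "0 < sine_eigenvector k n (replicate k 0)"
    using sine_eigenvector_pos k(2) by blast
  then show "\<exists>lam\<in>partitions k n. ?v lam \<noteq> 0"
    using zero by (intro bexI[of _ "replicate k 0"]) auto
  fix mu assume mu: "mu \<in> partitions k n"
  show "(\<Sum>lam\<in>partitions k n. c1_hat_coeff k n mu lam * ?v lam)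
      = of_real (real n * quantum_integer k (pi / real n)) * ?v mu"
    unfolding c1_hat_row[OF mu k] predecessor_sum_of_real predecessor_sum_sine_eigenvector[OF mu k] by simp
qed

section \<open>Eigenvalue bounds\<close>

lemma finite_eigenvalues_of_coefficients:
  fixes c :: "'a \<Rightarrow> 'a \<Rightarrow> complex"
  assumes "finite P"
  shows "finite {z. \<exists>v. (\<exists>l\<in>P. v l \<noteq> 0) \<and> (\<forall>m\<in>P. (\<Sum>l\<in>P. c m l * v l) = z * v m)}"
proof -
  obtain f where f: "bij_betw f {..<card P} P"
    using ex_bij_betw_nat_finite[OF assms] by (auto simp: atLeast0LessThan)
  define A :: "complex mat" where "A = Matrix.mat (card P) (card P) (\<lambda>(i, j). c (f i) (f j))"
  have A: "A \<in> carrier_mat (card P) (card P)"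
    unfolding A_def by simp
  have "{z. \<exists>v. (\<exists>l\<in>P. v l \<noteq> 0) \<and> (\<forall>m\<in>P. (\<Sum>l\<in>P. c m l * v l) = z * v m)} \<subseteq> {z. poly (char_poly A) z = 0}"
  proof safe
    fix z v l assume l: "l \<in> P" "v l \<noteq> 0" and ev: "\<forall>m\<in>P. (\<Sum>l\<in>P. c m l * v l) = z * v m"
    define w where "w = Matrix.vec (card P) (\<lambda>i. v (f i))"
    obtain i where i: "i < card P" "f i = l"
      using f l(1) unfolding bij_betw_def by (metis imageE lessThan_iff)
    have "w \<noteq> 0\<^sub>v (card P)"
      using i l unfolding w_def by (metis index_vec index_zero_vec(1))
    moreover have "A *\<^sub>v w = z \<cdot>\<^sub>v w"
    proof (rule eq_vecI)
      fix i assume "i < dim_vec (z \<cdot>\<^sub>v w)"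
      then have i: "i < card P"
        unfolding w_def by simp
      have "vec_index (A *\<^sub>v w) i = (\<Sum>j<card P. c (f i) (f j) * v (f j))"
        using i unfolding A_def w_def by (simp add: mult_mat_vec_def scalar_prod_def atLeast0LessThan)
      also have "\<dots> = (\<Sum>l\<in>P. c (f i) l * v l)"
        using sum.reindex_bij_betw[OF f, of "\<lambda>l. c (f i) l * v l"] by simp
      also have "\<dots> = z * v (f i)"
        using ev f i unfolding bij_betw_def by auto
      finally show "vec_index (A *\<^sub>v w) i = vec_index (z \<cdot>\<^sub>v w) i"
        using i unfolding w_def by simp
    qed (simp add: A_def w_def)
    ultimately have "eigenvector A w z"
      unfolding eigenvector_def using A by (simp add: w_def)
    then have "eigenvalue A z"
      unfolding eigenvalue_def by blast
    then show "poly (char_poly A) z = 0"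
      using eigenvalue_root_char_poly[OF A] by simp
  qed
  moreover have "char_poly A \<noteq> 0"
    using degree_monic_char_poly[OF A] by (metis coeff_0 zero_neq_one)
  ultimately show ?thesis
    using poly_roots_finite finite_subset by blast
qed

lemma finite_real_eigenvalues: "finite (real_eigenvalues k n)"
proof -
  have "finite {z. c1_hat_eigenvalue k n z}"
    unfolding c1_hat_eigenvalue_def by (rule finite_eigenvalues_of_coefficients[OF finite_partitions])
  then have "finite (complex_of_real -` {z. c1_hat_eigenvalue k n z})"
    by (rule finite_vimageI) (simp add: inj_on_def)
  then show ?thesis
    unfolding real_eigenvalues_def by (simp add: vimage_def)
qed

lemma norm_predecessor_sum_le:
  fixes v :: "nat list \<Rightarrow> 'a::real_normed_vector"
  assumes mu: "mu \<in> partitions k n" and bound: "\<And>l. l \<in> partitions k n \<Longrightarrow> norm (v l) \<le> M"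
  shows "norm (predecessor_sum k n v mu) \<le> real (predecessor_count k n mu) * M"
proof -
  have "norm (predecessor_sum k n v mu)
      \<le> (\<Sum>i<k. norm (if removable k n mu i then v (remove_box mu i) else 0))
        + norm (if has_unstar k n mu then v (unstar k n mu) else 0)"
    unfolding predecessor_sum_def by (intro norm_triangle_le add_mono norm_sum) simp
  also have "\<dots> \<le> (\<Sum>i<k. if removable k n mu i then M else 0) + (if has_unstar k n mu then M else 0)"
    using bound bound[OF mu] unfolding removable_def has_unstar_def by (intro add_mono sum_mono) auto
  also have "\<dots> = real (predecessor_count k n mu) * M"
    unfolding predecessor_count_def by (simp add: sum.inter_filter[symmetric] algebra_simps)
  finally show ?thesis .
qed

text \<open>Compare the eigenvalue equation in a coordinate of largest modulus.\<close>
lemma c1_hat_eigenvalue_norm_le: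
  assumes k: "1 \<le> k" "k < n"
    and count: "\<And>mu. mu \<in> partitions k n \<Longrightarrow> predecessor_count k n mu \<le> 1"
    and "c1_hat_eigenvalue k n z"
  shows "norm z \<le> real n"
proof -
  let ?P = "partitions k n"
  obtain v l0 where l0: "l0 \<in> ?P" "v l0 \<noteq> 0"
    and ev: "\<And>mu. mu \<in> ?P \<Longrightarrow> (\<Sum>lam\<in>?P. c1_hat_coeff k n mu lam * v lam) = z * v mu"
    using assms(4) unfolding c1_hat_eigenvalue_def by blast
  have fin: "finite ((\<lambda>l. norm (v l)) ` ?P)"
    using finite_partitions by simp
  then have "Max ((\<lambda>l. norm (v l)) ` ?P) \<in> (\<lambda>l. norm (v l)) ` ?P"
    using l0(1) by (intro Max_in) auto
  then obtain mu where mu: "mu \<in> ?P" and mu_max: "norm (v mu) = Max ((\<lambda>l. norm (v l)) ` ?P)"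
    by auto
  have max: "norm (v l) \<le> norm (v mu)" if "l \<in> ?P" for l
    unfolding mu_max using fin that by (intro Max_ge) auto
  have pos: "0 < norm (v mu)"
    using max[OF l0(1)] l0(2) by (metis zero_less_norm_iff order_less_le_trans)
  have "norm z * norm (v mu) = norm (of_nat n * predecessor_sum k n v mu)"
    using ev[OF mu] by (simp add: c1_hat_row[OF mu k] norm_mult)
  also have "\<dots> \<le> real n * (real (predecessor_count k n mu) * norm (v mu))"
    unfolding norm_mult using norm_predecessor_sum_le[OF mu max] by (simp add: mult_left_mono)
  also have "\<dots> \<le> real n * (1 * norm (v mu))"
    using count[OF mu] by (intro mult_left_mono mult_right_mono) auto
  finally show ?thesis
    using pos by simp
qed

lemma predecessor_count_k_1:
  assumes mu: "mu \<in> partitions 1 n"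
  shows "predecessor_count 1 n mu \<le> 1"
proof -
  have "length mu = 1"
    using partitions_length[OF mu] .
  then have last: "last mu = mu ! 0"
    by (cases mu) auto
  have "card {i \<in> {..<1::nat}. removable 1 n mu i} \<le> card {..<1::nat}"
    by (intro card_mono) auto
  moreover have "{i \<in> {..<1::nat}. removable 1 n mu i} = {}" if "has_unstar 1 n mu"
    using that last unfolding has_unstar_def removable_def by auto
  ultimately show ?thesis
    unfolding predecessor_count_def by (cases "has_unstar 1 n mu") auto
qed

lemma removable_n_minus_k_1_next_empty:
  assumes mu: "mu \<in> partitions k n" and nk: "n - k = 1" and i: "removable k n mu i" "Suc i < k"
  shows "mu ! Suc i = 0"
proof -
  have "remove_box mu i ! Suc i \<le> remove_box mu i ! i"
    using partitions_nth_antimono[of "remove_box mu i" k n i "Suc i"] i unfolding removable_def by simp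
  moreover have "mu ! i \<le> 1"
    using partitions_nth_le[OF mu, of i] i nk by simp
  ultimately show ?thesis
    using i partitions_length[OF mu] by (simp add: nth_remove_box)
qed

lemma predecessor_count_n_minus_k_1:
  assumes mu: "mu \<in> partitions k n" and k: "2 \<le> k" and nk: "n - k = 1"
  shows "predecessor_count k n mu \<le> 1"
proof -
  have len: "length mu = k"
    using partitions_length[OF mu] .
  note next_empty = removable_n_minus_k_1_next_empty[OF mu nk]
  have not_both: "\<not> (removable k n mu i \<and> removable k n mu j)" if "i < j" "j < k" for i j
  proof
    assume both: "removable k n mu i \<and> removable k n mu j"
    then have "mu ! j \<le> 0"
      using next_empty[of i] partitions_nth_antimono[OF mu, of "Suc i" j] that by simp
    then show False
      using both unfolding removable_def by simp
  qed
  have unique: "i = j" if "i < k" "j < k" "removable k n mu i" "removable k n mu j" for i j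
    using not_both[of i j] not_both[of j i] that by (metis linorder_neqE_nat)
  show ?thesis
  proof (cases "has_unstar k n mu")
    case True
    then have "Suc (mu ! 0) \<le> 1"
      using partitions_nth_le[of "unstar k n mu" k n 1] nth_unstar[of 1 mu] k nk len
      unfolding has_unstar_def by simp
    then have "\<not> removable k n mu i" if "i < k" for i
      using partitions_nth_antimono[OF mu, of 0 i] that unfolding removable_def by simp
    then show ?thesis
      unfolding predecessor_count_def using True by simp
  next
    case False
    then show ?thesis
      unfolding predecessor_count_def using unique by (simp add: card_le_Suc0_iff_eq)
  qed
qed

lemma predecessor_count_projective:
  assumes "grass_iso_proj k n" "1 \<le> k" "k < n" "mu \<in> partitions k n"
  shows "predecessor_count k n mu \<le> 1"
proof (cases "k = 1")
  case True
  then show ?thesis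
    using predecessor_count_k_1 assms(4) by simp
next
  case False
  then have "2 \<le> k" "n - k = 1"
    using assms(1-3) unfolding grass_iso_proj_def by auto
  then show ?thesis
    using predecessor_count_n_minus_k_1 assms(4) by blast
qed

section \<open>Estimates for quantum integers and Galkin's bound\<close>

lemma quantum_integer_n_minus_1:
  assumes "2 \<le> n"
  shows "quantum_integer (n - 1) (pi / real n) = 1"
proof -
  have "real (n - 1) * (pi / real n) = pi - pi / real n"
    using assms by (simp add: field_simps)
  then have "sin (pi / real n) * quantum_integer (n - 1) (pi / real n) = sin (pi / real n)"
    by (simp add: sin_mult_quantum_integer)
  then show ?thesis
    using sin_pi_div_pos[of n] assms by simp
qed

lemma cos_ge_1_minus_sq_half: "1 - x\<^sup>2 / 2 \<le> cos (x::real)"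
proof -
  have "\<bar>sin (x / 2)\<bar> \<le> \<bar>x / 2\<bar>"
    by (rule abs_sin_x_le_abs_x)
  then have "sin (x / 2) ^ 2 \<le> (x / 2) ^ 2"
    by (metis abs_le_square_iff)
  moreover have "cos x = 1 - 2 * sin (x / 2) ^ 2"
    using cos_double_sin[of "x / 2"] by simp
  ultimately show ?thesis
    by (simp add: power_divide)
qed

lemma sum_shifted_even_squares:
  "(\<Sum>m<k. (c - 2 * real m)\<^sup>2)
     = real k * c\<^sup>2 - 2 * c * real k * (real k - 1) + 2 * (real k - 1) * real k * (2 * real k - 1) / 3"
  by (induction k) (simp_all add: power2_eq_square field_simps)

lemma quantum_integer_ge:
  "real k - \<theta>\<^sup>2 * (real k * ((real k)\<^sup>2 - 1)) / 6 \<le> quantum_integer k \<theta>"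
proof -
  have "(\<Sum>m<k. (real k - 1 - 2 * real m)\<^sup>2) = real k * ((real k)\<^sup>2 - 1) / 3"
    by (subst sum_shifted_even_squares) (simp add: power2_eq_square field_simps)
  moreover have "(\<Sum>m<k. 1 - ((real k - 1 - 2 * real m) * \<theta>)\<^sup>2 / 2)
      = real k - \<theta>\<^sup>2 / 2 * (\<Sum>m<k. (real k - 1 - 2 * real m)\<^sup>2)"
    by (simp add: sum_subtractf sum_distrib_left power_mult_distrib mult.commute)
  ultimately have "real k - \<theta>\<^sup>2 * (real k * ((real k)\<^sup>2 - 1)) / 6
      = (\<Sum>m<k. 1 - ((real k - 1 - 2 * real m) * \<theta>)\<^sup>2 / 2)"
    by simp
  also have "\<dots> \<le> quantum_integer k \<theta>"
    unfolding quantum_integer_def by (intro sum_mono cos_ge_1_minus_sq_half)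
  finally show ?thesis .
qed

lemma galkin_gap_of_pi_sq_less:
  assumes k: "2 \<le> k" and kn: "pi\<^sup>2 * real k < 6 * real n"
  shows "real (k * (n - k)) + 1 < real n * quantum_integer k (pi / real n)"
proof -
  have "3 * 3 < pi * pi"
    using pi_gt3 by (intro mult_strict_mono) auto
  then have "9 * real k \<le> pi\<^sup>2 * real k"
    by (intro mult_right_mono) (auto simp: power2_eq_square)
  then have n: "0 < real n" "k \<le> n"
    using kn by linarith+
  have "2 * 2 \<le> real k * real k"
    using k by (intro mult_mono) auto
  then have k2: "1 < (real k)\<^sup>2 - 1"
    by (simp add: power2_eq_square)
  have "pi\<^sup>2 * real k / (6 * real n) < 1"
    using kn n by simp
  then have "((real k)\<^sup>2 - 1) * (pi\<^sup>2 * real k / (6 * real n)) < ((real k)\<^sup>2 - 1) * 1"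
    using k2 by (intro mult_strict_left_mono) auto
  then have small: "pi\<^sup>2 * real k * ((real k)\<^sup>2 - 1) / (6 * real n) < (real k)\<^sup>2 - 1"
    by (simp add: field_simps)
  have "real (k * (n - k)) + 1 = real n * real k - ((real k)\<^sup>2 - 1)"
    using n by (simp add: power2_eq_square algebra_simps)
  also have "\<dots> < real n * real k - pi\<^sup>2 * real k * ((real k)\<^sup>2 - 1) / (6 * real n)"
    using small by linarith
  also have "\<dots> = real n * (real k - (pi / real n)\<^sup>2 * (real k * ((real k)\<^sup>2 - 1)) / 6)"
    using n by (simp add: field_simps power2_eq_square)
  also have "\<dots> \<le> real n * quantum_integer k (pi / real n)"
    using n quantum_integer_ge by (intro mult_left_mono) auto
  finally show ?thesis .
qed

lemma pi_sq_less: "pi\<^sup>2 < 9.9"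
proof -
  have "pi * pi \<le> 3.1415926535899 * 3.1415926535899"
    using pi_approx pi_gt_zero by (intro mult_mono) auto
  then show ?thesis
    by (simp add: power2_eq_square)
qed

lemma quantum_integer_4_6: "quantum_integer 4 (pi / 6) = sqrt 3"
proof -
  have "quantum_integer 4 (pi / 6) = cos (pi / 2) + cos (pi / 6) + cos (- (pi / 6)) + cos (- (pi / 2))"
    unfolding quantum_integer_def by (simp add: numeral_eq_Suc lessThan_Suc algebra_simps)
  then show ?thesis
    by (simp add: cos_30)
qed

lemma quantum_integer_5_8: "quantum_integer 5 (pi / 8) = 1 + sqrt 2"
proof -
  have "quantum_integer 5 (pi / 8)
      = cos (pi / 2) + cos (pi / 4) + cos 0 + cos (- (pi / 4)) + cos (- (pi / 2))"
    unfolding quantum_integer_def by (simp add: numeral_eq_Suc lessThan_Suc algebra_simps)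
  then show ?thesis
    by (simp add: cos_45)
qed

lemma galkin_range_pi_sq_less:
  assumes "(k = 2 \<and> 4 \<le> n) \<or> (k = 3 \<and> 5 \<le> n) \<or> (4 \<le> k \<and> 2 * (k - 1) \<le> n)"
    and "\<not> (k = 4 \<and> n = 6)" "\<not> (k = 5 \<and> n = 8)"
  shows "pi\<^sup>2 * real k < 6 * real n"
proof -
  have "33 * k \<le> 20 * n"
  proof (cases "k \<le> 5")
    case True
    then have "(k = 2 \<and> 4 \<le> n) \<or> (k = 3 \<and> 5 \<le> n) \<or> (k = 4 \<and> 7 \<le> n) \<or> (k = 5 \<and> 9 \<le> n)"
      using assms by auto
    then show ?thesis
      by auto
  qed (use assms(1) in auto)
  then have "9.9 * real k \<le> 6 * real n"
    by linarith
  moreover have "pi\<^sup>2 * real k < 9.9 * real k"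
    using pi_sq_less assms(1) by (intro mult_strict_right_mono) auto
  ultimately show ?thesis
    by linarith
qed

lemma galkin_gap:
  assumes range: "(k = 2 \<and> 4 \<le> n) \<or> (k = 3 \<and> 5 \<le> n) \<or> (4 \<le> k \<and> 2 * (k - 1) \<le> n)"
  shows "real (k * (n - k)) + 1 < real n * quantum_integer k (pi / real n)"
proof -
  have "(3 / 2 :: real) < sqrt 3"
    by (rule real_less_rsqrt) (simp add: power2_eq_square)
  moreover have "(1 :: real) < sqrt 2"
    by (rule real_less_rsqrt) simp
  moreover have "2 \<le> k"
    using range by auto
  ultimately show ?thesis
    using galkin_gap_of_pi_sq_less galkin_range_pi_sq_less[OF range]
    by (cases "k = 4 \<and> n = 6 \<or> k = 5 \<and> n = 8") (auto simp: quantum_integer_4_6 quantum_integer_5_8)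
qed

lemma sine_eigenvalue_in_real_eigenvalues:
  "1 \<le> k \<Longrightarrow> k < n \<Longrightarrow> real n * quantum_integer k (pi / real n) \<in> real_eigenvalues k n"
  unfolding real_eigenvalues_def using c1_hat_eigenvalue_sine_eigenvector by simp

lemma galkin_lower_bound_projective:
  assumes k: "1 \<le> k" "k < n" and proj: "grass_iso_proj k n"
  shows "galkin_lower_bound k n"
proof -
  have "quantum_integer k (pi / real n) = 1"
  proof (cases "k = 1")
    case False
    then have "k = n - 1"
      using proj unfolding grass_iso_proj_def by simp
    then show ?thesis
      using quantum_integer_n_minus_1[of n] k by simp
  qed (simp add: quantum_integer_def)
  then have n: "real n \<in> real_eigenvalues k n"
    using sine_eigenvalue_in_real_eigenvalues[OF k] by simp
  have "x \<le> real n" if "x \<in> real_eigenvalues k n" for x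
    using c1_hat_eigenvalue_norm_le[OF k predecessor_count_projective[OF proj k]] that
    unfolding real_eigenvalues_def by fastforce
  then have "delta0 k n = real n"
    unfolding delta0_def using n finite_real_eigenvalues by (intro Max_eqI) auto
  moreover have "real (k * (n - k)) + 1 = real n"
    using proj k unfolding grass_iso_proj_def by auto
  ultimately show ?thesis
    unfolding galkin_lower_bound_def using n finite_real_eigenvalues proj by auto
qed

lemma galkin_lower_bound_of_gap:
  assumes k: "1 \<le> k" "k < n" and not_proj: "\<not> grass_iso_proj k n"
    and gap: "real (k * (n - k)) + 1 < real n * quantum_integer k (pi / real n)"
  shows "galkin_lower_bound k n"
proof -
  have "real n * quantum_integer k (pi / real n) \<le> delta0 k n"
    unfolding delta0_def using finite_real_eigenvalues sine_eigenvalue_in_real_eigenvalues[OF k]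
    by (rule Max_ge)
  then show ?thesis
    unfolding galkin_lower_bound_def
    using finite_real_eigenvalues sine_eigenvalue_in_real_eigenvalues[OF k] not_proj gap by auto
qed

lemma galkin_lower_bound_if:
  assumes "1 \<le> k" "k < n"
    and "grass_iso_proj k n \<or> real (k * (n - k)) + 1 < real n * quantum_integer k (pi / real n)"
  shows "galkin_lower_bound k n"
  using assms galkin_lower_bound_projective galkin_lower_bound_of_gap by blast

theorem proposition3p5:
  shows "(\<forall>n\<ge>2. galkin_lower_bound 1 n)
       \<and> (\<forall>n\<ge>3. galkin_lower_bound 2 n)
       \<and> (\<forall>n\<ge>4. galkin_lower_bound 3 n)
       \<and> (\<forall>k n. k \<ge> 4 \<and> n \<ge> 2 * (k - 1) \<longrightarrow> galkin_lower_bound k n)"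
proof (intro conjI allI impI)
  fix n :: nat
  assume "2 \<le> n"
  then show "galkin_lower_bound 1 n"
    by (intro galkin_lower_bound_if) (auto simp: grass_iso_proj_def)
next
  fix n :: nat
  assume "3 \<le> n"
  then show "galkin_lower_bound 2 n"
    using galkin_gap[of 2 n] by (intro galkin_lower_bound_if; cases "n = 3") (auto simp: grass_iso_proj_def)
next
  fix n :: nat
  assume "4 \<le> n"
  then show "galkin_lower_bound 3 n"
    using galkin_gap[of 3 n] by (intro galkin_lower_bound_if; cases "n = 4") (auto simp: grass_iso_proj_def)
next
  fix k n :: nat
  assume "4 \<le> k \<and> 2 * (k - 1) \<le> n"
  then show "galkin_lower_bound k n"
    using galkin_gap[of k n] by (intro galkin_lower_bound_if) auto
qed

end
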